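(* Let $F(x,y)=(f(x,y),x,y)$ be a germ at $o=(0,0)$ of a real analytic map into $\mathbf{R}^3_1$ with $f(0,0)=0$, $f_x(0,0)=0$, $f_y(0,0)=1$, such that $\{B_F\neq0\}$ is dense in the domain, $A_F-\varphi B_F^2\equiv0$ for some real analytic function germ $\varphi$ at $o$, and $\nabla B_F(o)=(0,0)$. Let $\alpha_F(y):=f_{xx}(0,y)$ and $\beta_F(y):=\tfrac12 f_{xxx}(0,y)$. Then there exists a real number $\mu_F$ such that $$\alpha_F'+\alpha_F^2+\mu_F=0,\qquad \beta_F''+4\alpha_F\beta_F'=0.$$ Moreover, if $\mu_F>0$ (resp. $\mu_F<0$) then $F$ has no time-like points (resp. no space-like points) near $o$. In particular, if $F$ changes causal type, then $\mu_F=0$.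
   Context: $\mathbf{R}^3_1$ is Lorentz–Minkowski 3-space with coordinates $(t,x,y)$ and inner product $-dt^2+dx^2+dy^2$. $B_F:=1-f_x^2-f_y^2$, $A_F:=(1-f_x^2)f_{yy}+2f_xf_yf_{xy}+(1-f_y^2)f_{xx}$. A point is space-like if $B_F>0$, time-like if $B_F<0$. $F$ changes causal type means every neighborhood of $o$ contains both space-like and time-like points. Primes denote $d/dy$. (For such $F$ one has $f(x,y)=y+\frac{\alpha_F(y)}2x^2+\frac{\beta_F(y)}3x^3+O(x^4)$.) *)

theory Defs
  imports "HOL-Analysis.Analysis"
begin

text \<open>Real analytic functions of two real variables on an open set U: locally the
  (unconditionally, hence absolutely) convergent sum of a double power series.\<close>
definition real_analytic_on2 :: "(real \<times> real) set \<Rightarrow> (real \<times> real \<Rightarrow> real) \<Rightarrow> bool" where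
  "real_analytic_on2 U g \<longleftrightarrow>
     (\<forall>p\<in>U. \<exists>r>0. ball p r \<subseteq> U \<and> (\<exists>c :: nat \<times> nat \<Rightarrow> real.
        \<forall>q\<in>ball p r. ((\<lambda>(i,j). c (i,j) * (fst q - fst p)^i * (snd q - snd p)^j) has_sum g q) UNIV))"

definition pdx :: "(real \<times> real \<Rightarrow> real) \<Rightarrow> real \<times> real \<Rightarrow> real" where
  "pdx g p = deriv (\<lambda>t. g (t, snd p)) (fst p)"

definition pdy :: "(real \<times> real \<Rightarrow> real) \<Rightarrow> real \<times> real \<Rightarrow> real" where
  "pdy g p = deriv (\<lambda>t. g (fst p, t)) (snd p)"

definition BF :: "(real \<times> real \<Rightarrow> real) \<Rightarrow> real \<times> real \<Rightarrow> real" where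
  "BF f p = 1 - (pdx f p)^2 - (pdy f p)^2"

definition AF :: "(real \<times> real \<Rightarrow> real) \<Rightarrow> real \<times> real \<Rightarrow> real" where
  "AF f p = (1 - (pdx f p)^2) * pdy (pdy f) p + 2 * pdx f p * pdy f p * pdy (pdx f) p
            + (1 - (pdy f p)^2) * pdx (pdx f) p"

definition alphaF :: "(real \<times> real \<Rightarrow> real) \<Rightarrow> real \<Rightarrow> real" where
  "alphaF f y = pdx (pdx f) (0, y)"

definition betaF :: "(real \<times> real \<Rightarrow> real) \<Rightarrow> real \<Rightarrow> real" where
  "betaF f y = pdx (pdx (pdx f)) (0, y) / 2"

definition changes_causal_type :: "(real \<times> real) set \<Rightarrow> (real \<times> real \<Rightarrow> real) \<Rightarrow> bool" where
  "changes_causal_type U f \<longleftrightarrow>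
     (\<forall>e>0. (\<exists>p\<in>U \<inter> ball (0,0) e. BF f p > 0) \<and> (\<exists>p\<in>U \<inter> ball (0,0) e. BF f p < 0))"

end

(*
  Expanding f and phi in convergent double power series makes every partial derivative
  available, so the identity A_F = phi B_F^2 may be differentiated in x as often as needed;
  this is done symbolically, on polynomials in the jets d_x^a d_y^b f and d_x^a d_y^b phi.

  On the axis x = 0, the identity and its first x-derivative can be solved for f_yy and f_xyy,
  which gives a linear differential inequality for (f_y - 1, f_x, f_xy).  These vanish at the
  origin (the hypotheses on f and on grad B_F), hence on the whole axis near it.  The second and
  third x-derivatives of the identity then reduce on the axis to (alpha' + alpha^2)' = 0 and
  beta'' + 4 alpha beta' = 0, and the Taylor expansion of B_F in x becomes
  B_F = mu x^2 + O(x^3) with mu = -(alpha' + alpha^2), so mu fixes the sign of B_F near o.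
*)

theory Submission
  imports Defs
begin

lemma DERIV_imp_deriv_on_open:
  assumes "(h has_real_derivative D) (at y)" "open S" "y \<in> S" "\<And>t. t \<in> S \<Longrightarrow> h t = g t"
  shows "deriv g y = D"
  using has_field_derivative_transform_within_open[OF assms] by (rule DERIV_imp_deriv)

lemma dist_origin_Pair: "dist (0,0) (x,y) = norm (x, y :: real)"
  by (simp add: dist_Pair_Pair norm_Pair dist_real_def)

lemma abs_le_of_derivative_bound:
  fixes u v :: "real \<Rightarrow> real"
  assumes deriv: "\<And>z. \<bar>z\<bar> \<le> \<delta> \<Longrightarrow> (u has_real_derivative v z) (at z)"
    and bound: "\<And>z. \<bar>z\<bar> \<le> \<delta> \<Longrightarrow> \<bar>v z\<bar> \<le> B"
    and "u 0 = 0" "\<bar>t\<bar> \<le> \<delta>"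
  shows "\<bar>u t\<bar> \<le> B * \<delta>"
proof -
  have "0 \<le> B" using bound[of 0] \<open>\<bar>t\<bar> \<le> \<delta>\<close> by linarith
  have "norm (u t - u 0) \<le> B * norm (t - 0)"
    by (rule field_differentiable_bound[OF convex_cball[of 0 \<delta>]])
      (use assms in \<open>auto simp: dist_real_def intro: has_field_derivative_at_within\<close>)
  also have "\<dots> \<le> B * \<delta>" using \<open>0 \<le> B\<close> assms(4) by (simp add: mult_left_mono)
  finally show ?thesis using \<open>u 0 = 0\<close> by simp
qed

(* Z = sum of the |u i| attains its maximum M on [-delta, delta]; the mean value bound
   gives Z <= M/2 there, so M = 0. *)

lemma linear_ode_vanishing:
  fixes u v :: "'i \<Rightarrow> real \<Rightarrow> real"
  assumes "finite I" "d > 0"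
    and deriv: "\<And>i t. i \<in> I \<Longrightarrow> \<bar>t\<bar> < d \<Longrightarrow> (u i has_real_derivative v i t) (at t)"
    and bound: "\<And>i t. i \<in> I \<Longrightarrow> \<bar>t\<bar> < d \<Longrightarrow> \<bar>v i t\<bar> \<le> L * (\<Sum>j\<in>I. \<bar>u j t\<bar>)"
    and init: "\<And>i. i \<in> I \<Longrightarrow> u i 0 = 0"
  obtains e where "e > 0" "\<And>i t. i \<in> I \<Longrightarrow> \<bar>t\<bar> < e \<Longrightarrow> u i t = 0"
proof -
  define L' where "L' = max L 1"
  define C where "C = (real (card I) + 1) * L'"
  have L': "L \<le> L'" "0 < L'" by (auto simp: L'_def)
  then have C: "0 < C" "real (card I) * L' \<le> C" by (auto simp: C_def distrib_right intro!: add_nonneg_pos)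
  define \<delta> where "\<delta> = min (d/2) (1 / (2 * C))"
  have \<delta>: "0 < \<delta>" "\<delta> < d" "C * \<delta> \<le> 1/2"
    using \<open>d > 0\<close> C by (auto simp: \<delta>_def min_def field_simps)
  define Z where "Z t = (\<Sum>j\<in>I. \<bar>u j t\<bar>)" for t
  have Z_nonneg: "0 \<le> Z t" for t by (simp add: Z_def sum_nonneg)
  have "isCont (u j) t" if "j \<in> I" "\<bar>t\<bar> \<le> \<delta>" for j t
    using DERIV_isCont[OF deriv[OF that(1)]] that \<delta> by auto
  then have "continuous_on {-\<delta>..\<delta>} Z"
    unfolding Z_def by (intro continuous_intros continuous_at_imp_continuous_on) auto
  then obtain t0 where t0: "t0 \<in> {-\<delta>..\<delta>}" and M: "\<And>t. t \<in> {-\<delta>..\<delta>} \<Longrightarrow> Z t \<le> Z t0"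
    using continuous_attains_sup[of "{-\<delta>..\<delta>}" Z] \<delta> by auto
  have "\<bar>v i z\<bar> \<le> L' * Z t0" if "i \<in> I" "\<bar>z\<bar> \<le> \<delta>" for i z
  proof -
    have "\<bar>v i z\<bar> \<le> L * Z z" using bound[OF that(1)] that(2) \<delta> by (simp add: Z_def)
    also have "\<dots> \<le> L' * Z t0"
      by (rule mult_mono) (use L' Z_nonneg M[of z] that in \<open>auto simp: abs_le_iff\<close>)
    finally show ?thesis .
  qed
  then have each: "\<bar>u i t\<bar> \<le> L' * Z t0 * \<delta>" if "i \<in> I" "\<bar>t\<bar> \<le> \<delta>" for i t
    using that deriv \<delta> init by (intro abs_le_of_derivative_bound[of \<delta> "u i" "v i"]) auto
  have "Z t \<le> Z t0 / 2" if "\<bar>t\<bar> \<le> \<delta>" for t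
  proof -
    have "Z t \<le> card I * (L' * Z t0 * \<delta>)"
      using sum_bounded_above[of I "\<lambda>j. \<bar>u j t\<bar>" "L' * Z t0 * \<delta>"] each that
      by (simp add: Z_def[of t])
    also have "\<dots> = (real (card I) * L') * (\<delta> * Z t0)" by (simp add: mult_ac)
    also have "\<dots> \<le> C * (\<delta> * Z t0)"
      using C \<delta> Z_nonneg by (intro mult_right_mono) auto
    also have "\<dots> \<le> Z t0 / 2"
      using mult_right_mono[OF \<delta>(3) Z_nonneg[of t0]] by (simp add: mult_ac)
    finally show ?thesis .
  qed
  then have "Z t = 0" if "\<bar>t\<bar> \<le> \<delta>" for t
    using M[of t] Z_nonneg[of t] Z_nonneg[of t0] t0 that by (force simp: abs_le_iff)
  then show thesis
    using \<delta>(1) \<open>finite I\<close> by (intro that[of \<delta>]) (auto simp: Z_def sum_nonneg_eq_0_iff)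
qed

lemma bound_from_linear_relation:
  fixes v p q a b :: real
  assumes rel: "(1 - q^2) * v + q * a - p * b = 0" and q: "\<bar>q\<bar> \<le> 1/2"
    and "\<bar>a\<bar> \<le> K" "\<bar>b\<bar> \<le> K"
  shows "\<bar>v\<bar> \<le> 2 * K * (\<bar>p\<bar> + \<bar>q\<bar>)"
proof -
  have "\<bar>q\<bar> * \<bar>q\<bar> \<le> 1/2 * (1/2)" using q by (intro mult_mono) auto
  then have "q^2 \<le> 1/4" by (simp add: abs_mult_self_eq power2_eq_square)
  then have "1/2 * \<bar>v\<bar> \<le> (1 - q^2) * \<bar>v\<bar>" by (intro mult_right_mono) auto
  also have "\<dots> = \<bar>(1 - q^2) * v\<bar>" using \<open>q^2 \<le> 1/4\<close> by (simp add: abs_mult)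
  also have "\<dots> = \<bar>p * b - q * a\<bar>" using rel by (simp add: algebra_simps)
  also have "\<dots> \<le> \<bar>p\<bar> * K + \<bar>q\<bar> * K"
    using assms(3,4) by (intro order_trans[OF abs_triangle_ineq4 add_mono])
      (simp_all add: abs_mult mult_left_mono)
  finally show ?thesis by (simp add: algebra_simps)
qed

lemma sign_of_cubic_perturbation:
  fixes g :: "real \<times> real \<Rightarrow> real"
  assumes "0 < r" "0 < \<mu>"
    and taylor: "\<And>x y. \<bar>x\<bar> < r \<Longrightarrow> \<bar>y\<bar> < r \<Longrightarrow> \<exists>d. \<bar>d\<bar> \<le> K \<and> g (x,y) = \<mu> * x^2 + d * x^3"
  shows "\<exists>e>0. \<forall>p\<in>ball (0,0) e. 0 \<le> g p"
proof -
  have K: "0 \<le> K" using taylor[of 0 0] \<open>0 < r\<close> by auto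
  define e where "e = min r (\<mu> / (K + 1))"
  have e: "0 < e" using assms K by (simp add: e_def)
  have "0 \<le> g (x,y)" if "(x,y) \<in> ball (0,0) e" for x y
  proof -
    have "\<bar>x\<bar> < e" "\<bar>y\<bar> < e"
      using that norm_fst_le[of x y] norm_snd_le[of y x] by (auto simp: dist_origin_Pair)
    then have xy: "\<bar>x\<bar> < r" "\<bar>y\<bar> < r" "(K + 1) * \<bar>x\<bar> \<le> \<mu>"
      using K by (auto simp: e_def field_simps)
    obtain d where d: "\<bar>d\<bar> \<le> K" "g (x,y) = \<mu> * x^2 + d * x^3" using taylor[OF xy(1,2)] by blast
    have "\<bar>d * x^3\<bar> = (\<bar>d\<bar> * \<bar>x\<bar>) * x^2"
      by (simp add: abs_mult power_abs power2_eq_square power3_eq_cube)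
    also have "\<dots> \<le> \<mu> * x^2"
    proof (rule mult_right_mono)
      have "\<bar>d\<bar> * \<bar>x\<bar> \<le> K * \<bar>x\<bar>" using d(1) by (rule mult_right_mono) simp
      then show "\<bar>d\<bar> * \<bar>x\<bar> \<le> \<mu>" using xy(3) by (simp add: distrib_right)
    qed simp
    finally show ?thesis using d(2) by linarith
  qed
  then show ?thesis using e by auto
qed

section \<open>Double power series\<close>

definition dps_term :: "(nat \<times> nat \<Rightarrow> real) \<Rightarrow> real \<Rightarrow> real \<Rightarrow> nat \<times> nat \<Rightarrow> real" where
  "dps_term c x y = (\<lambda>(i,j). c (i,j) * x^i * y^j)"

definition dps :: "(nat \<times> nat \<Rightarrow> real) \<Rightarrow> real \<Rightarrow> real \<Rightarrow> real" where
  "dps c x y = (\<Sum>\<^sub>\<infinity>ij. dps_term c x y ij)"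

definition dps_abs_summable :: "(nat \<times> nat \<Rightarrow> real) \<Rightarrow> real \<Rightarrow> bool" where
  "dps_abs_summable c s \<longleftrightarrow> (\<forall>t. 0 \<le> t \<and> t < s \<longrightarrow> dps_term (\<lambda>ij. \<bar>c ij\<bar>) t t summable_on UNIV)"

definition dps_dx :: "(nat \<times> nat \<Rightarrow> real) \<Rightarrow> nat \<times> nat \<Rightarrow> real" where
  "dps_dx c = (\<lambda>(i,j). of_nat (Suc i) * c (Suc i, j))"

definition dps_swap :: "(nat \<times> nat \<Rightarrow> real) \<Rightarrow> nat \<times> nat \<Rightarrow> real" where
  "dps_swap c = (\<lambda>(i,j). c (j,i))"

definition dps_dy :: "(nat \<times> nat \<Rightarrow> real) \<Rightarrow> nat \<times> nat \<Rightarrow> real" where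
  "dps_dy c = dps_swap (dps_dx (dps_swap c))"

definition dps_partial :: "(nat \<times> nat \<Rightarrow> real) \<Rightarrow> nat \<Rightarrow> nat \<Rightarrow> real \<Rightarrow> real \<Rightarrow> real" where
  "dps_partial c a b = dps ((dps_dx ^^ a) ((dps_dy ^^ b) c))"

lemma dps_term_abs_le:
  assumes "\<bar>x\<bar> \<le> t" "\<bar>y\<bar> \<le> t"
  shows "\<bar>dps_term c x y ij\<bar> \<le> dps_term (\<lambda>ij. \<bar>c ij\<bar>) t t ij"
proof -
  obtain i j where ij: "ij = (i,j)" by (cases ij)
  have t: "0 \<le> t" using assms(1) by linarith
  have "\<bar>x\<bar>^i \<le> t^i" "\<bar>y\<bar>^j \<le> t^j" using assms by (auto intro: power_mono)
  then have "\<bar>c (i,j)\<bar> * \<bar>x\<bar>^i * \<bar>y\<bar>^j \<le> \<bar>c (i,j)\<bar> * t^i * t^j"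
    using t by (intro mult_mono mult_left_mono) auto
  then show ?thesis by (simp add: dps_term_def ij abs_mult power_abs)
qed

lemma dps_term_abs_summable_mono:
  assumes "dps_term (\<lambda>ij. \<bar>c ij\<bar>) t t summable_on UNIV" "0 \<le> t'" "t' \<le> t"
  shows "dps_term (\<lambda>ij. \<bar>c ij\<bar>) t' t' summable_on UNIV"
proof (rule summable_on_comparison_test[OF assms(1)])
  fix ij :: "nat \<times> nat"
  show nonneg: "0 \<le> dps_term (\<lambda>ij. \<bar>c ij\<bar>) t' t' ij"
    using assms(2) by (auto simp: dps_term_def split: prod.split)
  have "\<bar>dps_term (\<lambda>ij. \<bar>c ij\<bar>) t' t' ij\<bar> \<le> dps_term (\<lambda>ij. \<bar>\<bar>c ij\<bar>\<bar>) t t ij"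
    using assms(2,3) by (intro dps_term_abs_le) auto
  then show "dps_term (\<lambda>ij. \<bar>c ij\<bar>) t' t' ij \<le> dps_term (\<lambda>ij. \<bar>c ij\<bar>) t t ij"
    using nonneg by simp
qed

lemma dps_abs_summable_mono:
  "dps_abs_summable c s \<Longrightarrow> s' \<le> s \<Longrightarrow> dps_abs_summable c s'"
  by (auto simp: dps_abs_summable_def)

lemma dps_abs_summable_norm:
  assumes c: "dps_abs_summable c s" and "\<bar>x\<bar> < s" "\<bar>y\<bar> < s"
  shows "(\<lambda>ij. norm (dps_term c x y ij)) summable_on UNIV"
proof (rule Infinite_Sum.abs_summable_on_comparison_test')
  define t where "t = max \<bar>x\<bar> \<bar>y\<bar>"
  show "dps_term (\<lambda>ij. \<bar>c ij\<bar>) t t summable_on UNIV"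
    using c assms by (auto simp: dps_abs_summable_def t_def)
  show "norm (dps_term c x y ij) \<le> dps_term (\<lambda>ij. \<bar>c ij\<bar>) t t ij" for ij
    using dps_term_abs_le[of x t y] by (simp add: t_def)
qed

lemma dps_summable:
  "dps_abs_summable c s \<Longrightarrow> \<bar>x\<bar> < s \<Longrightarrow> \<bar>y\<bar> < s \<Longrightarrow> dps_term c x y summable_on UNIV"
  using dps_abs_summable_norm summable_on_iff_abs_summable_on_real by metis

lemma dps_bound:
  assumes c: "dps_abs_summable c s" and r: "0 \<le> r" "r < s" and "\<bar>x\<bar> \<le> r" "\<bar>y\<bar> \<le> r"
  shows "\<bar>dps c x y\<bar> \<le> (\<Sum>\<^sub>\<infinity>ij. dps_term (\<lambda>ij. \<bar>c ij\<bar>) r r ij)"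
proof -
  have norm_sm: "(\<lambda>ij. norm (dps_term c x y ij)) summable_on UNIV"
    using dps_abs_summable_norm[OF c] assms by auto
  have "\<bar>dps c x y\<bar> \<le> (\<Sum>\<^sub>\<infinity>ij. norm (dps_term c x y ij))"
    unfolding dps_def using norm_infsum_bound[of "dps_term c x y" UNIV] norm_sm by simp
  also have "\<dots> \<le> (\<Sum>\<^sub>\<infinity>ij. dps_term (\<lambda>ij. \<bar>c ij\<bar>) r r ij)"
  proof (rule infsum_mono[OF norm_sm])
    show "dps_term (\<lambda>ij. \<bar>c ij\<bar>) r r summable_on UNIV"
      using c r by (simp add: dps_abs_summable_def)
    show "norm (dps_term c x y ij) \<le> dps_term (\<lambda>ij. \<bar>c ij\<bar>) r r ij" for ij
      using dps_term_abs_le[of x r y] assms by simp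
  qed
  finally show ?thesis .
qed

lemma dps_row_expansion:
  assumes c: "dps_abs_summable c s" and "\<bar>x\<bar> < s" "\<bar>y\<bar> < s"
  defines "a \<equiv> \<lambda>i. \<Sum>\<^sub>\<infinity>j. c (i,j) * y^j"
  shows "(\<lambda>i. a i * x^i) sums dps c x y"
proof -
  have sm: "(\<lambda>(i,j). dps_term c x y (i,j)) summable_on UNIV \<times> UNIV"
    using dps_summable[OF assms(1-3)] by simp
  have row: "(\<Sum>\<^sub>\<infinity>j. dps_term c x y (i, j)) = a i * x^i" for i
  proof -
    have "(\<Sum>\<^sub>\<infinity>j. dps_term c x y (i, j)) = (\<Sum>\<^sub>\<infinity>j. c (i,j) * y^j * x^i)"
      by (rule infsum_cong) (simp add: dps_term_def algebra_simps)
    then show ?thesis unfolding a_def by (simp add: infsum_cmult_left')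
  qed
  have "(\<lambda>i. \<Sum>\<^sub>\<infinity>j. dps_term c x y (i, j)) summable_on UNIV"
    using summable_on_Sigma_banach[OF sm] by simp
  then have "((\<lambda>i. a i * x^i) has_sum (\<Sum>\<^sub>\<infinity>i. \<Sum>\<^sub>\<infinity>j. dps_term c x y (i, j))) UNIV"
    using row by (simp add: has_sum_infsum)
  moreover have "(\<Sum>\<^sub>\<infinity>i. \<Sum>\<^sub>\<infinity>j. dps_term c x y (i, j)) = dps c x y"
    unfolding dps_def using infsum_Sigma_banach[OF sm] by simp
  ultimately show ?thesis by (simp add: has_sum_imp_sums)
qed

lemma Suc_mult_power_le_const_power:
  fixes t u :: real
  assumes "0 < t" "t < u"
  obtains B where "0 < B" "\<And>i. of_nat (Suc i) * t^i \<le> B * u^Suc i"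
proof -
  have "norm (t/u) < 1" using assms by auto
  then have "convergent (\<lambda>n. of_nat n * (t/u) ^ n)"
    using powser_times_n_limit_0 convergent_def by blast
  then have "Bseq (\<lambda>n. of_nat n * (t/u) ^ n)" by (rule convergent_imp_Bseq)
  then obtain M where M: "0 < M" "\<And>n. norm (of_nat n * (t/u) ^ n) \<le> M"
    unfolding Bseq_def by blast
  have "of_nat (Suc i) * t^i \<le> (M/t) * u^Suc i" for i
  proof -
    have "of_nat (Suc i) * t^Suc i / u^Suc i \<le> M"
      using M(2)[of "Suc i"] assms by (simp add: power_divide)
    then have "of_nat (Suc i) * t^Suc i \<le> M * u^Suc i"
      using assms by (simp add: pos_divide_le_eq)
    then show ?thesis using assms by (simp add: field_simps)
  qed
  then show thesis using M(1) assms by (intro that[of "M/t"]) auto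
qed

lemma dps_abs_summable_dx:
  assumes c: "dps_abs_summable c s"
  shows "dps_abs_summable (dps_dx c) s"
  unfolding dps_abs_summable_def
proof (intro allI impI)
  fix t0 :: real assume t0: "0 \<le> t0 \<and> t0 < s"
  define t where "t = max t0 (s/2)"
  define u where "u = (t + s) / 2"
  have t: "0 < t" "t < u" "u < s" "t0 \<le> t" using t0 by (auto simp: t_def u_def)
  (* The factor Suc i is absorbed by passing from the radius t to the larger radius u. *)
  obtain B where B: "0 < B" "\<And>i. of_nat (Suc i) * t^i \<le> B * u^Suc i"
    using Suc_mult_power_le_const_power[OF t(1,2)] by blast
  have inj: "inj (\<lambda>(i::nat,j::nat). (Suc i, j))" by (auto simp: inj_def)
  have "dps_term (\<lambda>ij. \<bar>c ij\<bar>) u u summable_on range (\<lambda>(i,j). (Suc i, j))"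
    by (rule summable_on_subset_banach[of _ UNIV]) (use c t in \<open>auto simp: dps_abs_summable_def\<close>)
  then have "(dps_term (\<lambda>ij. \<bar>c ij\<bar>) u u \<circ> (\<lambda>(i,j). (Suc i, j))) summable_on UNIV"
    using summable_on_reindex[OF inj] by blast
  then have majorant: "(\<lambda>ij. B * (dps_term (\<lambda>ij. \<bar>c ij\<bar>) u u \<circ> (\<lambda>(i,j). (Suc i, j))) ij) summable_on UNIV"
    by (rule summable_on_cmult_right)
  have "dps_term (\<lambda>ij. \<bar>dps_dx c ij\<bar>) t t summable_on UNIV"
  proof (rule summable_on_comparison_test[OF majorant])
    fix ij :: "nat \<times> nat"
    obtain i j where ij: "ij = (i,j)" by (cases ij)
    have "\<bar>c (Suc i, j)\<bar> * (of_nat (Suc i) * t^i) \<le> \<bar>c (Suc i, j)\<bar> * (B * u^Suc i)"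
      using B(2) by (rule mult_left_mono) simp
    moreover have "t^j \<le> u^j" using t by (intro power_mono) auto
    ultimately have "\<bar>c (Suc i, j)\<bar> * (of_nat (Suc i) * t^i) * t^j \<le> \<bar>c (Suc i, j)\<bar> * (B * u^Suc i) * u^j"
      by (rule mult_mono) (use B(1) t in auto)
    then show "dps_term (\<lambda>ij. \<bar>dps_dx c ij\<bar>) t t ij \<le> B * (dps_term (\<lambda>ij. \<bar>c ij\<bar>) u u \<circ> (\<lambda>(i,j). (Suc i, j))) ij"
      by (simp add: ij dps_term_def dps_dx_def abs_mult mult_ac)
    show "0 \<le> dps_term (\<lambda>ij. \<bar>dps_dx c ij\<bar>) t t ij"
      using t by (simp add: ij dps_term_def)
  qed
  then show "dps_term (\<lambda>ij. \<bar>dps_dx c ij\<bar>) t0 t0 summable_on UNIV"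
    by (rule dps_term_abs_summable_mono) (use t0 t in auto)
qed

(* For fixed y the double series is a power series in x, so termdiffs applies. *)
lemma has_real_derivative_dps_x:
  assumes c: "dps_abs_summable c s" and x: "\<bar>x\<bar> < s" and y: "\<bar>y\<bar> < s"
  shows "((\<lambda>t. dps c t y) has_real_derivative dps (dps_dx c) x y) (at x)"
proof -
  define a where "a i = (\<Sum>\<^sub>\<infinity>j. c (i,j) * y^j)" for i
  define K where "K = (\<bar>x\<bar> + s) / 2"
  have K: "\<bar>x\<bar> < \<bar>K\<bar>" "\<bar>K\<bar> < s" using x y by (auto simp: K_def)
  have "summable (\<lambda>i. a i * K^i)"
    using dps_row_expansion[OF c K(2) y] sums_summable by (simp add: a_def)
  then have deriv: "((\<lambda>t. \<Sum>i. a i * t^i) has_real_derivative (\<Sum>i. diffs a i * x^i)) (at x)"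
    by (rule termdiffs_strong) (use K in auto)
  have row_dx: "(\<Sum>\<^sub>\<infinity>j. dps_dx c (i,j) * y^j) = diffs a i" for i
  proof -
    have "(\<Sum>\<^sub>\<infinity>j. dps_dx c (i,j) * y^j) = (\<Sum>\<^sub>\<infinity>j. of_nat (Suc i) * (c (Suc i,j) * y^j))"
      by (rule infsum_cong) (simp add: dps_dx_def)
    then show ?thesis by (simp add: infsum_cmult_right' diffs_def a_def)
  qed
  have "(\<lambda>i. diffs a i * x^i) sums dps (dps_dx c) x y"
    using dps_row_expansion[OF dps_abs_summable_dx[OF c] x y] by (simp only: row_dx)
  then have "(\<Sum>i. diffs a i * x^i) = dps (dps_dx c) x y"
    by (rule sums_unique[symmetric])
  moreover have "(\<Sum>i. a i * t^i) = dps c t y" if "\<bar>t\<bar> < s" for t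
    using dps_row_expansion[OF c that y] unfolding a_def by (rule sums_unique[symmetric])
  then have "((\<lambda>t. dps c t y) has_real_derivative (\<Sum>i. diffs a i * x^i)) (at x)"
    using x by (intro has_field_derivative_transform_within_open[OF deriv, of "ball 0 s"])
      (auto simp: dist_real_def)
  ultimately show ?thesis by simp
qed

lemma dps_swap_swap [simp]: "dps_swap (dps_swap c) = c"
  by (auto simp: dps_swap_def fun_eq_iff)

lemma dps_swap: "dps (dps_swap c) y x = dps c x y"
proof -
  have "dps_term (dps_swap c) y x = (\<lambda>ij. dps_term c x y (prod.swap ij))"
    by (auto simp: dps_term_def dps_swap_def fun_eq_iff)
  then show ?thesis
    unfolding dps_def by (simp add: infsum_reindex_bij_betw[OF bij_swap[THEN bij_betw_subset]])
qed

lemma dps_abs_summable_swap: "dps_abs_summable (dps_swap c) s \<longleftrightarrow> dps_abs_summable c s"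
proof -
  have "dps_term (\<lambda>ij. \<bar>dps_swap c ij\<bar>) t t = (\<lambda>ij. dps_term (\<lambda>ij. \<bar>c ij\<bar>) t t (prod.swap ij))" for t
    by (auto simp: dps_term_def dps_swap_def fun_eq_iff)
  then show ?thesis
    unfolding dps_abs_summable_def
    by (simp add: summable_on_reindex_bij_betw[OF bij_swap[THEN bij_betw_subset]])
qed

lemma dps_abs_summable_dy: "dps_abs_summable c s \<Longrightarrow> dps_abs_summable (dps_dy c) s"
  by (simp add: dps_dy_def dps_abs_summable_swap dps_abs_summable_dx)

lemma has_real_derivative_dps_y:
  assumes "dps_abs_summable c s" "\<bar>x\<bar> < s" "\<bar>y\<bar> < s"
  shows "((\<lambda>t. dps c x t) has_real_derivative dps (dps_dy c) x y) (at y)"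
proof -
  have "((\<lambda>t. dps (dps_swap c) t x) has_real_derivative dps (dps_dx (dps_swap c)) y x) (at y)"
    using assms by (intro has_real_derivative_dps_x) (simp_all add: dps_abs_summable_swap)
  then show ?thesis
    using dps_swap[of "dps_swap (dps_dx (dps_swap c))" y x] by (simp add: dps_swap dps_dy_def)
qed

lemma dps_dx_dy_commute: "dps_dx (dps_dy c) = dps_dy (dps_dx c)"
  by (auto simp: dps_dx_def dps_dy_def dps_swap_def fun_eq_iff)

lemma dps_abs_summable_partial:
  "dps_abs_summable c s \<Longrightarrow> dps_abs_summable ((dps_dx ^^ a) ((dps_dy ^^ b) c)) s"
proof -
  assume c: "dps_abs_summable c s"
  then have "dps_abs_summable ((dps_dy ^^ b) c) s"
    by (induction b) (auto intro: dps_abs_summable_dy)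
  then show ?thesis by (induction a) (auto intro: dps_abs_summable_dx)
qed

lemma has_real_derivative_dps_partial_x:
  "dps_abs_summable c s \<Longrightarrow> \<bar>x\<bar> < s \<Longrightarrow> \<bar>y\<bar> < s \<Longrightarrow>
    ((\<lambda>t. dps_partial c a b t y) has_real_derivative dps_partial c (Suc a) b x y) (at x)"
  using has_real_derivative_dps_x[OF dps_abs_summable_partial] by (simp add: dps_partial_def)

lemma has_real_derivative_dps_partial_y:
  "dps_abs_summable c s \<Longrightarrow> \<bar>x\<bar> < s \<Longrightarrow> \<bar>y\<bar> < s \<Longrightarrow>
    ((\<lambda>t. dps_partial c a b x t) has_real_derivative dps_partial c a (Suc b) x y) (at y)"
proof -
  assume "dps_abs_summable c s" "\<bar>x\<bar> < s" "\<bar>y\<bar> < s"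
  then have "((\<lambda>t. dps_partial c a b x t) has_real_derivative
      dps (dps_dy ((dps_dx ^^ a) ((dps_dy ^^ b) c))) x y) (at y)"
    using has_real_derivative_dps_y[OF dps_abs_summable_partial] by (simp add: dps_partial_def)
  moreover have "dps_dy ((dps_dx ^^ a) c') = (dps_dx ^^ a) (dps_dy c')" for c'
    by (induction a) (simp_all flip: dps_dx_dy_commute)
  ultimately show ?thesis by (simp add: dps_partial_def)
qed

lemma dps_partial_bounded:
  assumes "dps_abs_summable c s" "0 \<le> r" "r < s"
  obtains M where "\<And>x y. \<bar>x\<bar> \<le> r \<Longrightarrow> \<bar>y\<bar> \<le> r \<Longrightarrow> \<bar>dps_partial c a b x y\<bar> \<le> M"
  using dps_bound[OF dps_abs_summable_partial[OF assms(1)] assms(2,3)] unfolding dps_partial_def by blast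

lemma real_analytic_on2_imp_dps:
  assumes "real_analytic_on2 U g" "(0,0) \<in> U"
  obtains s c where "s > 0" "dps_abs_summable c s"
    "\<And>x y. \<bar>x\<bar> < s \<Longrightarrow> \<bar>y\<bar> < s \<Longrightarrow> (x,y) \<in> U \<and> g (x,y) = dps c x y"
proof -
  obtain r c where r: "r > 0" "ball (0,0) r \<subseteq> U"
    and sums: "\<And>x y. (x,y) \<in> ball (0,0) r \<Longrightarrow> (dps_term c x y has_sum g (x,y)) UNIV"
    using assms unfolding real_analytic_on2_def dps_term_def by fastforce
  have square: "(x,y) \<in> ball (0,0) r" if "\<bar>x\<bar> < r/2" "\<bar>y\<bar> < r/2" for x y
    using norm_Pair_le[of x y] that by (simp add: dist_origin_Pair)
  have "dps_abs_summable c (r/2)"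
    unfolding dps_abs_summable_def
  proof (intro allI impI)
    fix t :: real assume t: "0 \<le> t \<and> t < r/2"
    then have "(t,t) \<in> ball (0,0) r" by (intro square) auto
    then have "dps_term c t t summable_on UNIV"
      using sums summable_on_def by blast
    then have "(\<lambda>ij. norm (dps_term c t t ij)) summable_on UNIV"
      using summable_on_iff_abs_summable_on_real by blast
    moreover have "(\<lambda>ij. norm (dps_term c t t ij)) = dps_term (\<lambda>ij. \<bar>c ij\<bar>) t t"
      using t by (auto simp: dps_term_def fun_eq_iff abs_mult)
    ultimately show "dps_term (\<lambda>ij. \<bar>c ij\<bar>) t t summable_on UNIV" by simp
  qed
  moreover have "(x,y) \<in> U \<and> g (x,y) = dps c x y" if "\<bar>x\<bar> < r/2" "\<bar>y\<bar> < r/2" for x y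
    using square[OF that] sums[OF square[OF that]] r by (auto simp: dps_def infsumI)
  ultimately show thesis using r by (intro that[of "r/2"]) auto
qed

lemma pdx_eq_dps_partial:
  assumes "dps_abs_summable c s" "\<bar>x\<bar> < s" "\<bar>y\<bar> < s"
    and "\<And>x y. \<bar>x\<bar> < s \<Longrightarrow> \<bar>y\<bar> < s \<Longrightarrow> g (x,y) = dps_partial c a b x y"
  shows "pdx g (x,y) = dps_partial c (Suc a) b x y"
  unfolding pdx_def fst_conv snd_conv
  by (rule DERIV_imp_deriv_on_open[OF has_real_derivative_dps_partial_x[OF assms(1-3)] open_ball[of 0 s]])
    (use assms in \<open>auto simp: dist_real_def\<close>)

lemma pdy_eq_dps_partial:
  assumes "dps_abs_summable c s" "\<bar>x\<bar> < s" "\<bar>y\<bar> < s"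
    and "\<And>x y. \<bar>x\<bar> < s \<Longrightarrow> \<bar>y\<bar> < s \<Longrightarrow> g (x,y) = dps_partial c a b x y"
  shows "pdy g (x,y) = dps_partial c a (Suc b) x y"
  unfolding pdy_def fst_conv snd_conv
  by (rule DERIV_imp_deriv_on_open[OF has_real_derivative_dps_partial_y[OF assms(1-3)] open_ball[of 0 s]])
    (use assms in \<open>auto simp: dist_real_def\<close>)

section \<open>Differential polynomials\<close>

datatype 'v dpoly = Const real | Var 'v | Add "'v dpoly" "'v dpoly" | Mul "'v dpoly" "'v dpoly"

primrec dpoly_eval :: "('v \<Rightarrow> real) \<Rightarrow> 'v dpoly \<Rightarrow> real" where
  "dpoly_eval \<nu> (Const a) = a"
| "dpoly_eval \<nu> (Var v) = \<nu> v"
| "dpoly_eval \<nu> (Add p q) = dpoly_eval \<nu> p + dpoly_eval \<nu> q"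
| "dpoly_eval \<nu> (Mul p q) = dpoly_eval \<nu> p * dpoly_eval \<nu> q"

primrec dpoly_deriv :: "('v \<Rightarrow> 'v) \<Rightarrow> 'v dpoly \<Rightarrow> 'v dpoly" where
  "dpoly_deriv \<sigma> (Const a) = Const 0"
| "dpoly_deriv \<sigma> (Var v) = Var (\<sigma> v)"
| "dpoly_deriv \<sigma> (Add p q) = Add (dpoly_deriv \<sigma> p) (dpoly_deriv \<sigma> q)"
| "dpoly_deriv \<sigma> (Mul p q) = Add (Mul (dpoly_deriv \<sigma> p) q) (Mul p (dpoly_deriv \<sigma> q))"

(* The operations are purely syntactic: dpoly satisfies no ring laws, only dpoly_eval does. *)
instantiation dpoly :: (type) "{one, plus, minus, uminus, times}"
begin
definition "1 = Const 1"
definition "p + q = Add p q"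
definition "- p = Mul (Const (-1)) p"
definition "p - q = Add p (- q)"
definition "p * q = Mul p q"
instance ..
end

lemmas dpoly_ops = one_dpoly_def plus_dpoly_def uminus_dpoly_def minus_dpoly_def
  times_dpoly_def

lemma has_real_derivative_dpoly_eval:
  assumes "\<And>v. ((\<lambda>t. \<nu> t v) has_real_derivative \<nu> x (\<sigma> v)) (at x)"
  shows "((\<lambda>t. dpoly_eval (\<nu> t) p) has_real_derivative dpoly_eval (\<nu> x) (dpoly_deriv \<sigma> p)) (at x)"
  using assms by (induction p) (auto intro!: derivative_eq_intros)

lemma dpoly_eval_bounded:
  assumes "\<And>v. \<exists>M. \<forall>z\<in>S. \<bar>\<nu> z v\<bar> \<le> M"
  shows "\<exists>K. \<forall>z\<in>S. \<bar>dpoly_eval (\<nu> z) p\<bar> \<le> K"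
proof (induction p)
  case (Add p q)
  then obtain K1 K2 where "\<forall>z\<in>S. \<bar>dpoly_eval (\<nu> z) p\<bar> \<le> K1" "\<forall>z\<in>S. \<bar>dpoly_eval (\<nu> z) q\<bar> \<le> K2"
    by blast
  then show ?case by (intro exI[of _ "K1 + K2"]) (auto intro!: order_trans[OF abs_triangle_ineq add_mono])
next
  case (Mul p q)
  then obtain K1 K2 where "\<forall>z\<in>S. \<bar>dpoly_eval (\<nu> z) p\<bar> \<le> K1" "\<forall>z\<in>S. \<bar>dpoly_eval (\<nu> z) q\<bar> \<le> K2"
    by blast
  then show ?case by (intro exI[of _ "K1 * K2"]) (auto simp: abs_mult intro: mult_mono' order_trans[OF abs_ge_zero])
qed (use assms in auto)

lemma dpoly_eval_deriv_funpow_eq_0: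
  assumes "open S" "x \<in> S"
    and deriv: "\<And>x v. x \<in> S \<Longrightarrow> ((\<lambda>t. \<nu> t v) has_real_derivative \<nu> x (\<sigma> v)) (at x)"
    and zero: "\<And>x. x \<in> S \<Longrightarrow> dpoly_eval (\<nu> x) p = 0"
  shows "dpoly_eval (\<nu> x) ((dpoly_deriv \<sigma> ^^ k) p) = 0"
  using \<open>x \<in> S\<close>
proof (induction k arbitrary: x)
  case (Suc k)
  have "((\<lambda>t. dpoly_eval (\<nu> t) ((dpoly_deriv \<sigma> ^^ k) p)) has_real_derivative
      dpoly_eval (\<nu> x) ((dpoly_deriv \<sigma> ^^ Suc k) p)) (at x)"
    using deriv[OF Suc.prems] by (simp add: has_real_derivative_dpoly_eval)
  moreover have "((\<lambda>t. dpoly_eval (\<nu> t) ((dpoly_deriv \<sigma> ^^ k) p)) has_real_derivative 0) (at x)"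
    using Suc \<open>open S\<close> by (intro has_field_derivative_transform_within_open[OF DERIV_const, of S]) auto
  ultimately show ?case by (rule DERIV_unique)
qed (use zero in simp)

section \<open>Jets of the graph function\<close>

(* Jf a b and Jphi a b stand for the partial derivatives d_x^a d_y^b f and d_x^a d_y^b phi. *)
datatype jet = Jf nat nat | Jphi nat nat

(* Indices are raised by "+ 1", not Suc: with One_nat_def removed from the simpset, simp then
   keeps them as numerals, matching the statements about F 1 0, F 2 1, ... below. *)
fun jet_dx :: "jet \<Rightarrow> jet" where
  "jet_dx (Jf a b) = Jf (a + 1) b"
| "jet_dx (Jphi a b) = Jphi (a + 1) b"

fun jet_dy :: "jet \<Rightarrow> jet" where
  "jet_dy (Jf a b) = Jf a (b + 1)"
| "jet_dy (Jphi a b) = Jphi a (b + 1)"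

abbreviation fj :: "nat \<Rightarrow> nat \<Rightarrow> jet dpoly" where "fj a b \<equiv> Var (Jf a b)"

abbreviation phij :: "nat \<Rightarrow> nat \<Rightarrow> jet dpoly" where "phij a b \<equiv> Var (Jphi a b)"

definition B_poly :: "jet dpoly" where
  "B_poly = 1 - fj 1 0 * fj 1 0 - fj 0 1 * fj 0 1"

definition A_poly :: "jet dpoly" where
  "A_poly = (1 - fj 1 0 * fj 1 0) * fj 0 2 + Const 2 * fj 1 0 * fj 0 1 * fj 1 1
    + (1 - fj 0 1 * fj 0 1) * fj 2 0"

definition AB_poly :: "jet dpoly" where
  "AB_poly = A_poly - phij 0 0 * B_poly * B_poly"

(* N_poly = - B_poly, written so that each term contains f_x or f_y - 1. *)
definition N_poly :: "jet dpoly" where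
  "N_poly = fj 1 0 * fj 1 0 + (fj 0 1 - 1) * (fj 0 1 + 1)"

definition AB_factor_fx :: "jet dpoly" where
  "AB_factor_fx = Const 2 * fj 0 1 * fj 1 1 - phij 0 0 * fj 1 0 * N_poly"

definition AB_factor_fy :: "jet dpoly" where
  "AB_factor_fy = (fj 0 1 + 1) * (fj 2 0 + phij 0 0 * N_poly)"

definition ABx_factor_fx :: "jet dpoly" where
  "ABx_factor_fx = Const 2 * fj 1 1 * fj 1 1 + Const 2 * fj 0 1 * fj 2 1 - Const 2 * fj 0 2 * fj 2 0
     - phij 1 0 * fj 1 0 * N_poly - Const 4 * phij 0 0 * N_poly * fj 2 0
     - Const 4 * phij 0 0 * fj 1 0 * fj 0 1 * fj 1 1"

definition ABx_factor_fy :: "jet dpoly" where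
  "ABx_factor_fy = (fj 0 1 + 1) * (fj 3 0 + phij 1 0 * N_poly + Const 4 * phij 0 0 * fj 0 1 * fj 1 1)"

(* Every term but the one with f_yy (resp. f_xyy) carries a factor f_x or f_y - 1. *)
lemma AB_poly_split:
  "dpoly_eval \<nu> AB_poly = (1 - \<nu> (Jf 1 0)^2) * \<nu> (Jf 0 2)
     + \<nu> (Jf 1 0) * dpoly_eval \<nu> AB_factor_fx - (\<nu> (Jf 0 1) - 1) * dpoly_eval \<nu> AB_factor_fy"
  by (simp add: AB_poly_def A_poly_def B_poly_def N_poly_def AB_factor_fx_def AB_factor_fy_def
      dpoly_ops algebra_simps power2_eq_square del: One_nat_def)

lemma AB_poly_deriv_split:
  "dpoly_eval \<nu> (dpoly_deriv jet_dx AB_poly) = (1 - \<nu> (Jf 1 0)^2) * \<nu> (Jf 1 2)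
     + \<nu> (Jf 1 0) * dpoly_eval \<nu> ABx_factor_fx - (\<nu> (Jf 0 1) - 1) * dpoly_eval \<nu> ABx_factor_fy"
  by (simp add: AB_poly_def A_poly_def B_poly_def N_poly_def ABx_factor_fx_def ABx_factor_fy_def
      dpoly_ops algebra_simps power2_eq_square del: One_nat_def)

section \<open>Germs satisfying the identity\<close>

locale AB_germ =
  fixes f \<phi> :: "real \<times> real \<Rightarrow> real" and c e :: "nat \<times> nat \<Rightarrow> real" and s :: real
  assumes s_pos: "0 < s"
    and c: "dps_abs_summable c s" and e: "dps_abs_summable e s"
    and f_dps: "\<And>x y. \<bar>x\<bar> < s \<Longrightarrow> \<bar>y\<bar> < s \<Longrightarrow> f (x,y) = dps c x y"
    and phi_dps: "\<And>x y. \<bar>x\<bar> < s \<Longrightarrow> \<bar>y\<bar> < s \<Longrightarrow> \<phi> (x,y) = dps e x y"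
    and AB: "\<And>x y. \<bar>x\<bar> < s \<Longrightarrow> \<bar>y\<bar> < s \<Longrightarrow> AF f (x,y) - \<phi> (x,y) * (BF f (x,y))^2 = 0"
    and fx0: "pdx f (0,0) = 0" and fy0: "pdy f (0,0) = 1"
    and gradB: "pdx (BF f) (0,0) = 0" "pdy (BF f) (0,0) = 0"
begin

abbreviation F :: "nat \<Rightarrow> nat \<Rightarrow> real \<Rightarrow> real \<Rightarrow> real" where "F \<equiv> dps_partial c"

definition jet_val :: "real \<Rightarrow> real \<Rightarrow> jet \<Rightarrow> real" where
  "jet_val x y v = (case v of Jf a b \<Rightarrow> F a b x y | Jphi a b \<Rightarrow> dps_partial e a b x y)"

lemma jet_val_simps [simp]:
  "jet_val x y (Jf a b) = F a b x y" "jet_val x y (Jphi a b) = dps_partial e a b x y"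
  by (simp_all add: jet_val_def)

lemma partials_of_f:
  assumes "\<bar>x\<bar> < s" "\<bar>y\<bar> < s"
  shows "pdx f (x,y) = F 1 0 x y" "pdy f (x,y) = F 0 1 x y" "pdx (pdx f) (x,y) = F 2 0 x y"
    "pdy (pdx f) (x,y) = F 1 1 x y" "pdy (pdy f) (x,y) = F 0 2 x y"
    "pdx (pdx (pdx f)) (x,y) = F 3 0 x y"
proof -
  note pdx = pdx_eq_dps_partial[OF c] and pdy = pdy_eq_dps_partial[OF c]
  have f: "f (x,y) = F 0 0 x y" if "\<bar>x\<bar> < s" "\<bar>y\<bar> < s" for x y
    using f_dps[OF that] by (simp add: dps_partial_def)
  have fx: "pdx f (x,y) = F 1 0 x y" if "\<bar>x\<bar> < s" "\<bar>y\<bar> < s" for x y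
    using pdx[OF that f] by simp
  have fy: "pdy f (x,y) = F 0 1 x y" if "\<bar>x\<bar> < s" "\<bar>y\<bar> < s" for x y
    using pdy[OF that f] by simp
  have fxx: "pdx (pdx f) (x,y) = F 2 0 x y" if "\<bar>x\<bar> < s" "\<bar>y\<bar> < s" for x y
    using pdx[OF that fx] by (simp add: eval_nat_numeral)
  show "pdx f (x,y) = F 1 0 x y" "pdy f (x,y) = F 0 1 x y" "pdx (pdx f) (x,y) = F 2 0 x y"
    using fx fy fxx assms by blast+
  show "pdy (pdx f) (x,y) = F 1 1 x y" using pdy[OF assms fx] by simp
  show "pdy (pdy f) (x,y) = F 0 2 x y" using pdy[OF assms fy] by (simp add: eval_nat_numeral)
  show "pdx (pdx (pdx f)) (x,y) = F 3 0 x y" using pdx[OF assms fxx] by (simp add: eval_nat_numeral)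
qed

lemma BF_eq_eval: "\<bar>x\<bar> < s \<Longrightarrow> \<bar>y\<bar> < s \<Longrightarrow> BF f (x,y) = dpoly_eval (jet_val x y) B_poly"
  by (simp add: BF_def B_poly_def dpoly_ops partials_of_f power2_eq_square del: One_nat_def)

lemma AB_poly_eq_0: "\<bar>x\<bar> < s \<Longrightarrow> \<bar>y\<bar> < s \<Longrightarrow> dpoly_eval (jet_val x y) AB_poly = 0"
  using AB[of x y] phi_dps[of x y]
  by (simp add: AF_def BF_eq_eval AB_poly_def A_poly_def partials_of_f dps_partial_def power2_eq_square
      dpoly_ops del: One_nat_def)

lemma has_real_derivative_jet_val_x:
  assumes "\<bar>x\<bar> < s" "\<bar>y\<bar> < s"
  shows "((\<lambda>t. jet_val t y v) has_real_derivative jet_val x y (jet_dx v)) (at x)"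
  using has_real_derivative_dps_partial_x[OF c assms] has_real_derivative_dps_partial_x[OF e assms]
  by (cases v) (simp_all add: Suc_eq_plus1 del: One_nat_def)

lemma has_real_derivative_jet_val_y:
  assumes "\<bar>x\<bar> < s" "\<bar>y\<bar> < s"
  shows "((\<lambda>t. jet_val x t v) has_real_derivative jet_val x y (jet_dy v)) (at y)"
  using has_real_derivative_dps_partial_y[OF c assms] has_real_derivative_dps_partial_y[OF e assms]
  by (cases v) (simp_all add: Suc_eq_plus1 del: One_nat_def)

lemma has_real_derivative_jet_x:
  "\<bar>x\<bar> < s \<Longrightarrow> \<bar>y\<bar> < s \<Longrightarrow> ((\<lambda>t. dpoly_eval (jet_val t y) p) has_real_derivative
    dpoly_eval (jet_val x y) (dpoly_deriv jet_dx p)) (at x)"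
  by (rule has_real_derivative_dpoly_eval) (rule has_real_derivative_jet_val_x)

lemma has_real_derivative_jet_y:
  "\<bar>x\<bar> < s \<Longrightarrow> \<bar>y\<bar> < s \<Longrightarrow> ((\<lambda>t. dpoly_eval (jet_val x t) p) has_real_derivative
    dpoly_eval (jet_val x y) (dpoly_deriv jet_dy p)) (at y)"
  by (rule has_real_derivative_dpoly_eval) (rule has_real_derivative_jet_val_y)

lemma AB_poly_deriv_x_eq_0:
  "\<bar>x\<bar> < s \<Longrightarrow> \<bar>y\<bar> < s \<Longrightarrow> dpoly_eval (jet_val x y) ((dpoly_deriv jet_dx ^^ k) AB_poly) = 0"
  using has_real_derivative_jet_val_x AB_poly_eq_0
  by (intro dpoly_eval_deriv_funpow_eq_0[of "ball 0 s" x "\<lambda>t. jet_val t y"]) (auto simp: dist_real_def)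

lemma pdx_eq_eval_deriv:
  assumes "\<bar>x\<bar> < s" "\<bar>y\<bar> < s"
    and "\<And>x y. \<bar>x\<bar> < s \<Longrightarrow> \<bar>y\<bar> < s \<Longrightarrow> g (x,y) = dpoly_eval (jet_val x y) p"
  shows "pdx g (x,y) = dpoly_eval (jet_val x y) (dpoly_deriv jet_dx p)"
  unfolding pdx_def fst_conv snd_conv
  by (rule DERIV_imp_deriv_on_open[OF has_real_derivative_jet_x[OF assms(1,2)] open_ball[of 0 s]])
    (use assms in \<open>auto simp: dist_real_def\<close>)

lemma pdy_eq_eval_deriv:
  assumes "\<bar>x\<bar> < s" "\<bar>y\<bar> < s"
    and "\<And>x y. \<bar>x\<bar> < s \<Longrightarrow> \<bar>y\<bar> < s \<Longrightarrow> g (x,y) = dpoly_eval (jet_val x y) p"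
  shows "pdy g (x,y) = dpoly_eval (jet_val x y) (dpoly_deriv jet_dy p)"
  unfolding pdy_def fst_conv snd_conv
  by (rule DERIV_imp_deriv_on_open[OF has_real_derivative_jet_y[OF assms(1,2)] open_ball[of 0 s]])
    (use assms in \<open>auto simp: dist_real_def\<close>)

lemma first_jets_at_origin: "F 1 0 0 0 = 0" "F 0 1 0 0 = 1"
  using fx0 fy0 partials_of_f[of 0 0] s_pos by simp_all

lemma second_jets_at_origin: "F 1 1 0 0 = 0" "F 0 2 0 0 = 0"
proof -
  have o: "\<bar>0\<bar> < s" using s_pos by simp
  have "pdx (BF f) (0,0) = - 2 * F 1 0 0 0 * F 2 0 0 0 - 2 * F 0 1 0 0 * F 1 1 0 0"
    using pdx_eq_eval_deriv[OF o o BF_eq_eval]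
    by (simp add: B_poly_def dpoly_ops algebra_simps del: One_nat_def)
  then show "F 1 1 0 0 = 0" using gradB(1) first_jets_at_origin by simp
  have "pdy (BF f) (0,0) = - 2 * F 1 0 0 0 * F 1 1 0 0 - 2 * F 0 1 0 0 * F 0 2 0 0"
    using pdy_eq_eval_deriv[OF o o BF_eq_eval]
    by (simp add: B_poly_def dpoly_ops algebra_simps del: One_nat_def)
  then show "F 0 2 0 0 = 0" using gradB(2) first_jets_at_origin by simp
qed

definition axis_normalized :: "real \<Rightarrow> bool" where
  "axis_normalized y \<longleftrightarrow>
     F 1 0 0 y = 0 \<and> F 0 1 0 y = 1 \<and> F 1 1 0 y = 0 \<and> F 0 2 0 y = 0 \<and> F 1 2 0 y = 0"

lemma jets_bounded:
  assumes "0 \<le> r" "r < s"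
  shows "\<exists>M. \<forall>z\<in>{z. \<bar>fst z\<bar> \<le> r \<and> \<bar>snd z\<bar> \<le> r}. \<bar>jet_val (fst z) (snd z) v\<bar> \<le> M"
proof (cases v)
  case (Jf a b)
  obtain M where "\<And>x y. \<bar>x\<bar> \<le> r \<Longrightarrow> \<bar>y\<bar> \<le> r \<Longrightarrow> \<bar>F a b x y\<bar> \<le> M"
    using dps_partial_bounded[OF c assms] by blast
  then show ?thesis using Jf by auto
next
  case (Jphi a b)
  obtain M where "\<And>x y. \<bar>x\<bar> \<le> r \<Longrightarrow> \<bar>y\<bar> \<le> r \<Longrightarrow> \<bar>dps_partial e a b x y\<bar> \<le> M"
    using dps_partial_bounded[OF e assms] by blast
  then show ?thesis using Jphi by auto
qed

lemma dpoly_bounded_on_square: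
  "\<exists>K. \<forall>x y. \<bar>x\<bar> \<le> s/2 \<longrightarrow> \<bar>y\<bar> \<le> s/2 \<longrightarrow> \<bar>dpoly_eval (jet_val x y) p\<bar> \<le> K"
proof -
  have "\<exists>K. \<forall>z\<in>{z. \<bar>fst z\<bar> \<le> s/2 \<and> \<bar>snd z\<bar> \<le> s/2}. \<bar>dpoly_eval (jet_val (fst z) (snd z)) p\<bar> \<le> K"
    using jets_bounded[of "s/2"] s_pos by (intro dpoly_eval_bounded) auto
  then show ?thesis by auto
qed

lemma has_real_derivative_F_axis:
  "\<bar>y\<bar> < s \<Longrightarrow> ((\<lambda>t. F a b 0 t) has_real_derivative F a (Suc b) 0 y) (at y)"
  using has_real_derivative_dps_partial_y[OF c, of 0 y] s_pos by simp

lemma axis_derivative_bounds: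
  obtains \<delta> K where "0 < \<delta>" "\<delta> < s" "0 \<le> K"
    "\<And>y. \<bar>y\<bar> < \<delta> \<Longrightarrow> \<bar>F 0 2 0 y\<bar> \<le> K * (\<bar>F 0 1 0 y - 1\<bar> + \<bar>F 1 0 0 y\<bar>)"
    "\<And>y. \<bar>y\<bar> < \<delta> \<Longrightarrow> \<bar>F 1 2 0 y\<bar> \<le> K * (\<bar>F 0 1 0 y - 1\<bar> + \<bar>F 1 0 0 y\<bar>)"
proof -
  obtain K1 K2 K3 K4 where
    "\<forall>x y. \<bar>x\<bar> \<le> s/2 \<longrightarrow> \<bar>y\<bar> \<le> s/2 \<longrightarrow> \<bar>dpoly_eval (jet_val x y) AB_factor_fx\<bar> \<le> K1"
    "\<forall>x y. \<bar>x\<bar> \<le> s/2 \<longrightarrow> \<bar>y\<bar> \<le> s/2 \<longrightarrow> \<bar>dpoly_eval (jet_val x y) AB_factor_fy\<bar> \<le> K2"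
    "\<forall>x y. \<bar>x\<bar> \<le> s/2 \<longrightarrow> \<bar>y\<bar> \<le> s/2 \<longrightarrow> \<bar>dpoly_eval (jet_val x y) ABx_factor_fx\<bar> \<le> K3"
    "\<forall>x y. \<bar>x\<bar> \<le> s/2 \<longrightarrow> \<bar>y\<bar> \<le> s/2 \<longrightarrow> \<bar>dpoly_eval (jet_val x y) ABx_factor_fy\<bar> \<le> K4"
    using dpoly_bounded_on_square[of AB_factor_fx] dpoly_bounded_on_square[of AB_factor_fy]
      dpoly_bounded_on_square[of ABx_factor_fx] dpoly_bounded_on_square[of ABx_factor_fy] by blast
  note K1 = this(1)[rule_format] and K2 = this(2)[rule_format]
    and K3 = this(3)[rule_format] and K4 = this(4)[rule_format]
  define K where "K = max 0 (max (max K1 K2) (max K3 K4))"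
  have "isCont (F 1 0 0) 0"
    using has_real_derivative_F_axis[of 0] s_pos by (auto intro: DERIV_isCont)
  then obtain d where "0 < d" "\<And>y. dist y 0 < d \<Longrightarrow> dist (F 1 0 0 y) (F 1 0 0 0) < 1/2"
    unfolding continuous_at_eps_delta by (meson half_gt_zero zero_less_one)
  then have d: "0 < d" "\<And>y. \<bar>y\<bar> < d \<Longrightarrow> \<bar>F 1 0 0 y\<bar> < 1/2"
    using first_jets_at_origin by (auto simp: dist_real_def)
  show thesis
  proof (rule that[of "min d (s/2)" "2 * K"])
    fix y assume "\<bar>y\<bar> < min d (s/2)"
    then have y: "\<bar>y\<bar> < s" "\<bar>y\<bar> \<le> s/2" "\<bar>F 1 0 0 y\<bar> \<le> 1/2" using d(2)[of y] by auto
    show "\<bar>F 0 2 0 y\<bar> \<le> 2 * K * (\<bar>F 0 1 0 y - 1\<bar> + \<bar>F 1 0 0 y\<bar>)"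
      using AB_poly_eq_0[of 0 y] y AB_poly_split[of "jet_val 0 y"] K1[of 0 y] K2[of 0 y] s_pos
      by (intro bound_from_linear_relation[where a = "dpoly_eval (jet_val 0 y) AB_factor_fx"
          and b = "dpoly_eval (jet_val 0 y) AB_factor_fy"]) (auto simp: K_def)
    show "\<bar>F 1 2 0 y\<bar> \<le> 2 * K * (\<bar>F 0 1 0 y - 1\<bar> + \<bar>F 1 0 0 y\<bar>)"
      using AB_poly_deriv_x_eq_0[of 0 y 1] y AB_poly_deriv_split[of "jet_val 0 y"] K3[of 0 y] K4[of 0 y] s_pos
      by (intro bound_from_linear_relation[where a = "dpoly_eval (jet_val 0 y) ABx_factor_fx"
          and b = "dpoly_eval (jet_val 0 y) ABx_factor_fy"]) (auto simp: K_def)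
  qed (use d s_pos in \<open>auto simp: K_def\<close>)
qed

lemma axis_normalized_near_origin:
  obtains \<epsilon> where "0 < \<epsilon>" "\<epsilon> \<le> s" "\<And>y. \<bar>y\<bar> < \<epsilon> \<Longrightarrow> axis_normalized y"
proof -
  obtain \<delta> K where \<delta>: "0 < \<delta>" "\<delta> < s" and "0 \<le> K"
    and bounds: "\<And>y. \<bar>y\<bar> < \<delta> \<Longrightarrow> \<bar>F 0 2 0 y\<bar> \<le> K * (\<bar>F 0 1 0 y - 1\<bar> + \<bar>F 1 0 0 y\<bar>)"
      "\<And>y. \<bar>y\<bar> < \<delta> \<Longrightarrow> \<bar>F 1 2 0 y\<bar> \<le> K * (\<bar>F 0 1 0 y - 1\<bar> + \<bar>F 1 0 0 y\<bar>)"
    using axis_derivative_bounds by metis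
  define u where "u = nth [\<lambda>y. F 0 1 0 y - 1, F 1 0 0, F 1 1 0]"
  define v where "v = nth [F 0 2 0, F 1 1 0, F 1 2 0]"
  have sum3: "(\<Sum>j<3. \<bar>u j y\<bar>) = \<bar>F 0 1 0 y - 1\<bar> + \<bar>F 1 0 0 y\<bar> + \<bar>F 1 1 0 y\<bar>" for y
    by (simp add: u_def eval_nat_numeral)
  have weaken: "K * (a + b) \<le> (K + 1) * (a + b + c)" "c \<le> (K + 1) * (a + b + c)"
    if "0 \<le> a" "0 \<le> b" "0 \<le> c" for a b c :: real
    using that \<open>0 \<le> K\<close> mult_nonneg_nonneg[of K c] mult_nonneg_nonneg[of K "a + b"]
    by (simp_all add: algebra_simps)
  obtain e where e: "0 < e" "\<And>i y. i \<in> {..<3} \<Longrightarrow> \<bar>y\<bar> < e \<Longrightarrow> u i y = 0"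
  proof (rule linear_ode_vanishing[of "{..<3}" \<delta> u v "K + 1"])
    fix i :: nat and y :: real assume "i \<in> {..<3}" and y: "\<bar>y\<bar> < \<delta>"
    then have i: "i = 0 \<or> i = 1 \<or> i = 2" and ys: "\<bar>y\<bar> < s" using \<delta> by auto
    then show "(u i has_real_derivative v i y) (at y)"
      using has_real_derivative_F_axis[OF ys] DERIV_diff[OF has_real_derivative_F_axis[OF ys] DERIV_const]
      by (auto simp: u_def v_def eval_nat_numeral)
    show "\<bar>v i y\<bar> \<le> (K + 1) * (\<Sum>j\<in>{..<3}. \<bar>u j y\<bar>)"
      unfolding sum3 using i bounds[OF y] weaken[of "\<bar>F 0 1 0 y - 1\<bar>" "\<bar>F 1 0 0 y\<bar>" "\<bar>F 1 1 0 y\<bar>"]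
      by (auto simp: v_def)
  qed (use \<delta> first_jets_at_origin second_jets_at_origin in \<open>auto simp: u_def less_Suc_eq eval_nat_numeral\<close>)
  show thesis
  proof (rule that[of "min e \<delta>"])
    fix y assume y: "\<bar>y\<bar> < min e \<delta>"
    then have "F 0 1 0 y = 1" "F 1 0 0 y = 0" "F 1 1 0 y = 0"
      using e(2)[of 0 y] e(2)[of 1 y] e(2)[of 2 y] by (auto simp: u_def)
    then show "axis_normalized y"
      using bounds[of y] y by (simp add: axis_normalized_def)
  qed (use e \<delta> in auto)
qed

lemma AB_poly_higher_derivs_on_axis:
  assumes "\<bar>y\<bar> < s" "axis_normalized y"
  shows "F 2 2 0 y + 2 * F 2 0 0 y * F 2 1 0 y = 0"
    and "F 3 2 0 y + 4 * F 2 0 0 y * F 3 1 0 y = 0"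
  using AB_poly_deriv_x_eq_0[of 0 y "Suc (Suc 0)"] AB_poly_deriv_x_eq_0[of 0 y "Suc (Suc (Suc 0))"] assms s_pos
  by (simp_all add: axis_normalized_def AB_poly_def A_poly_def B_poly_def dpoly_ops algebra_simps
      del: One_nat_def)

lemma B_poly_on_axis:
  assumes "axis_normalized y"
  shows "dpoly_eval (jet_val 0 y) B_poly = 0"
    and "dpoly_eval (jet_val 0 y) (dpoly_deriv jet_dx B_poly) = 0"
    and "dpoly_eval (jet_val 0 y) ((dpoly_deriv jet_dx ^^ 2) B_poly) = - 2 * (F 2 1 0 y + F 2 0 0 y ^ 2)"
  using assms
  by (simp_all add: axis_normalized_def B_poly_def dpoly_ops algebra_simps power2_eq_square
      numeral_2_eq_2 del: One_nat_def)

lemma alpha_beta_derivs: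
  assumes y: "\<bar>y\<bar> < s"
  shows "alphaF f y = F 2 0 0 y" "deriv (alphaF f) y = F 2 1 0 y"
    "deriv (betaF f) y = F 3 1 0 y / 2" "deriv (deriv (betaF f)) y = F 3 2 0 y / 2"
proof -
  have S: "open (ball (0::real) s)" by simp
  have alpha: "alphaF f t = F 2 0 0 t" and beta: "betaF f t = F 3 0 0 t / 2" if "\<bar>t\<bar> < s" for t
    using partials_of_f[of 0 t] that s_pos by (simp_all add: alphaF_def betaF_def)
  then show "alphaF f y = F 2 0 0 y" using y by simp
  show "deriv (alphaF f) y = F 2 1 0 y"
    using DERIV_imp_deriv_on_open[OF has_real_derivative_F_axis[OF y] S] alpha y by (simp add: dist_real_def)
  have dbeta: "deriv (betaF f) t = F 3 1 0 t / 2" if "\<bar>t\<bar> < s" for t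
  proof (rule DERIV_imp_deriv_on_open[OF _ S])
    show "((\<lambda>t. F 3 0 0 t / 2) has_real_derivative F 3 1 0 t / 2) (at t)"
      using DERIV_cdivide[OF has_real_derivative_F_axis[OF that]] by simp
  qed (use that beta in \<open>auto simp: dist_real_def\<close>)
  then show "deriv (betaF f) y = F 3 1 0 y / 2" using y by simp
  show "deriv (deriv (betaF f)) y = F 3 2 0 y / 2"
  proof (rule DERIV_imp_deriv_on_open[OF _ S])
    show "((\<lambda>t. F 3 1 0 t / 2) has_real_derivative F 3 2 0 y / 2) (at y)"
      using DERIV_cdivide[OF has_real_derivative_F_axis[OF y]] by (simp add: eval_nat_numeral)
  qed (use y dbeta in \<open>auto simp: dist_real_def\<close>)
qed

definition mu :: real where
  "mu = - (F 2 1 0 0 + F 2 0 0 0 ^ 2)"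

lemma riccati_on_axis:
  obtains \<epsilon> where "0 < \<epsilon>" "\<epsilon> \<le> s" "\<And>y. \<bar>y\<bar> < \<epsilon> \<Longrightarrow> axis_normalized y"
    "\<And>y. \<bar>y\<bar> < \<epsilon> \<Longrightarrow> F 2 1 0 y + F 2 0 0 y ^ 2 + mu = 0"
proof -
  obtain \<epsilon> where \<epsilon>: "0 < \<epsilon>" "\<epsilon> \<le> s" and axis: "\<And>y. \<bar>y\<bar> < \<epsilon> \<Longrightarrow> axis_normalized y"
    using axis_normalized_near_origin by blast
  define w where "w y = F 2 1 0 y + F 2 0 0 y ^ 2" for y
  have "(w has_real_derivative 0) (at y)" if y: "\<bar>y\<bar> < \<epsilon>" for y
  proof -
    have "\<bar>y\<bar> < s" using y \<epsilon> by simp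
    then have "(w has_real_derivative F 2 2 0 y + 2 * F 2 0 0 y * F 2 1 0 y) (at y)"
      unfolding w_def by (auto intro!: derivative_eq_intros has_real_derivative_F_axis
          simp: eval_nat_numeral)
    then show ?thesis using AB_poly_higher_derivs_on_axis(1) axis[OF y] \<open>\<bar>y\<bar> < s\<close> by simp
  qed
  then have w_const: "w y = w 0" if "\<bar>y\<bar> < \<epsilon>" for y
    using that \<epsilon> by (intro DERIV_isconst3[of "-\<epsilon>" \<epsilon>]) auto
  have "F 2 1 0 y + F 2 0 0 y ^ 2 + mu = 0" if "\<bar>y\<bar> < \<epsilon>" for y
    using w_const[OF that] by (simp add: w_def mu_def)
  with \<epsilon> axis show thesis by (rule that)
qed

lemma alpha_beta_equations:
  assumes "\<bar>y\<bar> < s" "axis_normalized y" "F 2 1 0 y + F 2 0 0 y ^ 2 + mu = 0"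
  shows "deriv (alphaF f) y + (alphaF f y)^2 + mu = 0"
    and "deriv (deriv (betaF f)) y + 4 * alphaF f y * deriv (betaF f) y = 0"
  unfolding alpha_beta_derivs[OF assms(1)]
  using assms AB_poly_higher_derivs_on_axis(2)[OF assms(1,2)] by (simp_all add: field_simps)

lemma BF_cubic_expansion:
  assumes \<epsilon>: "0 < \<epsilon>" "\<epsilon> \<le> s" and axis: "\<And>y. \<bar>y\<bar> < \<epsilon> \<Longrightarrow> axis_normalized y"
    and riccati: "\<And>y. \<bar>y\<bar> < \<epsilon> \<Longrightarrow> F 2 1 0 y + F 2 0 0 y ^ 2 + mu = 0"
  obtains K where "\<And>x y. \<bar>x\<bar> < min \<epsilon> (s/2) \<Longrightarrow> \<bar>y\<bar> < min \<epsilon> (s/2) \<Longrightarrow>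
    \<exists>d. \<bar>d\<bar> \<le> K \<and> BF f (x,y) = mu * x^2 + d * x^3"
proof -
  define D where "D m t y = dpoly_eval (jet_val t y) ((dpoly_deriv jet_dx ^^ m) B_poly)" for m t y
  obtain K where "\<forall>x y. \<bar>x\<bar> \<le> s/2 \<longrightarrow> \<bar>y\<bar> \<le> s/2 \<longrightarrow> \<bar>D 3 x y\<bar> \<le> K"
    unfolding D_def using dpoly_bounded_on_square by blast
  note K = this[rule_format]
  show thesis
  proof (rule that[of "K/6"])
    fix x y assume x: "\<bar>x\<bar> < min \<epsilon> (s/2)" and y: "\<bar>y\<bar> < min \<epsilon> (s/2)"
    have "\<forall>m t. m < 3 \<and> \<bar>t\<bar> \<le> \<bar>x\<bar> \<longrightarrow> ((\<lambda>t. D m t y) has_real_derivative D (Suc m) t y) (at t)"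
      using x y s_pos by (auto simp: D_def intro!: has_real_derivative_jet_x)
    then obtain t where t: "\<bar>t\<bar> \<le> \<bar>x\<bar>"
      and taylor: "D 0 x y = (\<Sum>m<3. D m 0 y / fact m * x^m) + D 3 t y / fact 3 * x^3"
      using Maclaurin_bi_le[of "\<lambda>m t. D m t y" "\<lambda>t. D 0 t y" 3 x] by auto
    have "\<bar>y\<bar> < \<epsilon>" using y by simp
    note on_axis = B_poly_on_axis[OF axis[OF this]] and riccati_y = riccati[OF this]
    have "D 0 0 y = 0" "D (Suc 0) 0 y = 0" using on_axis by (simp_all add: D_def)
    moreover have "D (Suc (Suc 0)) 0 y = 2 * mu"
      using on_axis(3) riccati_y by (simp add: D_def numeral_2_eq_2)
    ultimately have "(\<Sum>m<3. D m 0 y / fact m * x^m) = mu * x^2"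
      by (simp add: eval_nat_numeral)
    moreover have "BF f (x,y) = D 0 x y" using BF_eq_eval x y \<epsilon> by (simp add: D_def)
    moreover have "\<bar>D 3 t y / fact 3\<bar> \<le> K/6" using K[of t y] t x y by (simp add: fact_numeral)
    ultimately show "\<exists>d. \<bar>d\<bar> \<le> K/6 \<and> BF f (x,y) = mu * x^2 + d * x^3"
      using taylor by (intro exI[of _ "D 3 t y / fact 3"]) simp
  qed
qed

lemma BF_sign_near_origin:
  shows "0 < mu \<Longrightarrow> \<exists>e>0. \<forall>p\<in>ball (0,0) e. 0 \<le> BF f p"
    and "mu < 0 \<Longrightarrow> \<exists>e>0. \<forall>p\<in>ball (0,0) e. BF f p \<le> 0"
proof -
  obtain \<epsilon> where \<epsilon>: "0 < \<epsilon>" "\<epsilon> \<le> s" "\<And>y. \<bar>y\<bar> < \<epsilon> \<Longrightarrow> axis_normalized y"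
    "\<And>y. \<bar>y\<bar> < \<epsilon> \<Longrightarrow> F 2 1 0 y + F 2 0 0 y ^ 2 + mu = 0"
    using riccati_on_axis by blast
  obtain K where K: "\<And>x y. \<bar>x\<bar> < min \<epsilon> (s/2) \<Longrightarrow> \<bar>y\<bar> < min \<epsilon> (s/2) \<Longrightarrow>
      \<exists>d. \<bar>d\<bar> \<le> K \<and> BF f (x,y) = mu * x^2 + d * x^3"
    using BF_cubic_expansion[OF \<epsilon>] by metis
  have r: "0 < min \<epsilon> (s/2)" using \<epsilon>(1) s_pos by simp
  show "\<exists>e>0. \<forall>p\<in>ball (0,0) e. 0 \<le> BF f p" if "0 < mu"
    using sign_of_cubic_perturbation[OF r that K] .
  have "\<exists>d. \<bar>d\<bar> \<le> K \<and> - BF f (x,y) = - mu * x^2 + d * x^3"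
    if "\<bar>x\<bar> < min \<epsilon> (s/2)" "\<bar>y\<bar> < min \<epsilon> (s/2)" for x y
    using K[OF that] by (metis abs_minus_cancel minus_add_distrib mult_minus_left)
  then show "\<exists>e>0. \<forall>p\<in>ball (0,0) e. BF f p \<le> 0" if "mu < 0"
    using sign_of_cubic_perturbation[OF r, of "- mu" K "\<lambda>p. - BF f p"] that by auto
qed

end

theorem proposition4p1:
  fixes U :: "(real \<times> real) set" and f \<phi> :: "real \<times> real \<Rightarrow> real"
  assumes U_open: "open U" and o_in: "(0,0) \<in> U"
    and f_an: "real_analytic_on2 U f"
    and f0: "f (0,0) = 0" and fx0: "pdx f (0,0) = 0" and fy0: "pdy f (0,0) = 1"
    and dense: "U \<subseteq> closure {p \<in> U. BF f p \<noteq> 0}"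
    and phi_an: "real_analytic_on2 U \<phi>"
    and AB: "\<forall>p\<in>U. AF f p - \<phi> p * (BF f p)^2 = 0"
    and gradB: "pdx (BF f) (0,0) = 0" "pdy (BF f) (0,0) = 0"
  shows "\<exists>\<mu>::real.
           (\<exists>\<epsilon>>0. \<forall>y. \<bar>y\<bar> < \<epsilon> \<longrightarrow>
               deriv (alphaF f) y + (alphaF f y)^2 + \<mu> = 0 \<and>
               deriv (deriv (betaF f)) y + 4 * alphaF f y * deriv (betaF f) y = 0)
         \<and> (\<mu> > 0 \<longrightarrow> (\<exists>e>0. \<forall>p\<in>U \<inter> ball (0,0) e. \<not> BF f p < 0))
         \<and> (\<mu> < 0 \<longrightarrow> (\<exists>e>0. \<forall>p\<in>U \<inter> ball (0,0) e. \<not> BF f p > 0))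
         \<and> (changes_causal_type U f \<longrightarrow> \<mu> = 0)"
proof -
  obtain s1 c where s1: "0 < s1" "dps_abs_summable c s1"
    and f_dps: "\<And>x y. \<bar>x\<bar> < s1 \<Longrightarrow> \<bar>y\<bar> < s1 \<Longrightarrow> (x,y) \<in> U \<and> f (x,y) = dps c x y"
    using real_analytic_on2_imp_dps[OF f_an o_in] by blast
  obtain s2 e where s2: "0 < s2" "dps_abs_summable e s2"
    and phi_dps: "\<And>x y. \<bar>x\<bar> < s2 \<Longrightarrow> \<bar>y\<bar> < s2 \<Longrightarrow> (x,y) \<in> U \<and> \<phi> (x,y) = dps e x y"
    using real_analytic_on2_imp_dps[OF phi_an o_in] by blast
  interpret AB_germ f \<phi> c e "min s1 s2"
    using s1 s2 f_dps phi_dps AB fx0 fy0 gradB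
    by unfold_locales (auto intro: dps_abs_summable_mono)
  obtain \<epsilon> where \<epsilon>: "0 < \<epsilon>" "\<epsilon> \<le> min s1 s2" "\<And>y. \<bar>y\<bar> < \<epsilon> \<Longrightarrow> axis_normalized y"
    "\<And>y. \<bar>y\<bar> < \<epsilon> \<Longrightarrow> F 2 1 0 y + F 2 0 0 y ^ 2 + mu = 0"
    using riccati_on_axis by blast
  have "\<forall>y. \<bar>y\<bar> < \<epsilon> \<longrightarrow> deriv (alphaF f) y + (alphaF f y)^2 + mu = 0 \<and>
      deriv (deriv (betaF f)) y + 4 * alphaF f y * deriv (betaF f) y = 0"
    using alpha_beta_equations \<epsilon> by fastforce
  moreover have "mu = 0" if "changes_causal_type U f"
    using BF_sign_near_origin that unfolding changes_causal_type_def
    by (metis linorder_neqE_linordered_idom not_le IntD2)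
  ultimately show ?thesis
    using \<epsilon>(1) BF_sign_near_origin by (intro exI[of _ mu]) fastforce
qed

end
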